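(* Let $m\ge 2$ and let $\mathbf A$ be the $(2m-2)\times(2m-2)$ replacement matrix defined in the context. Define the vector $\mathbf v=(v_1,\dots,v_{2m-2})^T$ by $$v_i=\frac{i}{m(m+1)(H_m-1)}\quad (1\le i\le m),\qquad v_{m+j}=\frac{1}{m(m+1)(H_m-1)}\cdot\frac{m(m+1)}{j+2}\quad (1\le j\le m-2),$$ where $H_m=\sum_{r=1}^m 1/r$. Then $\mathbf A^T\mathbf v=\mathbf v$ and $\sum_{i=1}^{2m-2}v_i=1$. Moreover the eigenvalue $1$ is the eigenvalue of $\mathbf A^T$ of largest real part, its eigenspace is one-dimensional, and $\mathbf v$ is the unique eigenvector of $\mathbf A^T$ for eigenvalue $1$ whose components sum to $1$.
   Context: Fix an integer $m\ge 2$. Rows and columns of $\mathbf A$ are indexed by $1,\dots,2m-2$; entry $A_{r,c}$ is the net number of balls of color $c$ added when a ball of color $r$ is drawn. For $m=2$, $\mathbf A=\begin{pmatrix}-1&2\\1&0\end{pmatrix}$. For $m\ge 3$, all entries of $\mathbf A$ are $0$ except: row $1$: $A_{1,1}=-1$, $A_{1,m+1}=2$; row $i$ for $2\le i\le m$: $A_{i,i}=-i$, $A_{i,i-1}=i-1$, $A_{i,m+1}=2$; row $m+i-1$ for $2\le i\le m-2$: $A_{m+i-1,m+i-1}=-i$, $A_{m+i-1,m+i}=i+1$; row $2m-2$: $A_{2m-2,2m-2}=-(m-1)$, $A_{2m-2,m}=m$. (Every row sums to $1$.) $H_m=\sum_{r=1}^m 1/r$ denotes the $m$-th harmonic numbe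r. *)

theory Defs
  imports "Jordan_Normal_Form.Char_Poly"
begin

text \<open>Entry A_{r,c} of the replacement matrix (1-based indices r, c in 1..2m-2).\<close>
definition rep_entry :: "nat \<Rightarrow> nat \<Rightarrow> nat \<Rightarrow> int" where
  "rep_entry m r c =
    (if m = 2 then
       (if r = 1 \<and> c = 1 then -1 else if r = 1 \<and> c = 2 then 2
        else if r = 2 \<and> c = 1 then 1 else 0)
     else if r = 1 then
       (if c = 1 then -1 else if c = m + 1 then 2 else 0)
     else if 2 \<le> r \<and> r \<le> m then
       (if c = r then - int r else if c = r - 1 then int r - 1
        else if c = m + 1 then 2 else 0)
     else if m + 1 \<le> r \<and> r \<le> 2 * m - 3 then
       (let i = r + 1 - m in
        if c = r then - int i else if c = r + 1 then int i + 1 else 0)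
     else if r = 2 * m - 2 then
       (if c = r then - (int m - 1) else if c = m then int m else 0)
     else 0)"

definition repA :: "nat \<Rightarrow> complex mat" where
  "repA m = mat (2 * m - 2) (2 * m - 2)
      (\<lambda>(i, j). of_int (rep_entry m (i + 1) (j + 1)))"

definition harm :: "nat \<Rightarrow> real" where
  "harm m = (\<Sum>r = 1..m. 1 / real r)"

definition vcomp :: "nat \<Rightarrow> nat \<Rightarrow> real" where
  "vcomp m i =
    (if i \<le> m then real i / (real m * (real m + 1) * (harm m - 1))
     else (1 / (real m * (real m + 1) * (harm m - 1)))
          * (real m * (real m + 1) / (real (i - m) + 2)))"

definition vvec :: "nat \<Rightarrow> complex vec" where
  "vvec m = vec (2 * m - 2) (\<lambda>i. complex_of_real (vcomp m (i + 1)))"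

end

theory Submission
  imports Defs
begin

text \<open>
  The spectral claim is an instance of a general Gershgorin-type fact:
  for a real matrix with nonnegative off-diagonal entries and constant row sum s, every
  eigenvalue of the transpose other than s has real part < s.  Shifting by a multiple of
  the identity makes the matrix nonnegative, and summing absolute values in the
  left-eigenvector equation bounds the shifted eigenvalue by the shifted row sum.

  The eigenvector claims rest on explicit column formulas for the transposed replacement
  matrix.  They show that a fixed vector is determined by its first component (a fixed
  vector vanishing there vanishes everywhere), and that the explicit profile
  g_i = i+1 (i < m), g_i = m(m+1)/(i+3-m) (i >= m) is fixed.  Since g sums to
  m(m+1)(H_m - 1), the vector v of the statement is g normalised to total mass 1, so it is
  fixed, spans the eigenspace of 1, and is the unique fixed vector of total mass 1.
\<close>

lemma transpose_mat_mult_vec_nth: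
  assumes "w \<in> carrier_vec n" and "c < n"
  shows "(transpose_mat (mat n n f) *\<^sub>v w) $ c = (\<Sum>r<n. f (r, c) * w $ r)"
  using assms by (simp add: scalar_prod_def col_def row_def lessThan_atLeast0)

lemma sum_supported_on_two:
  assumes "finite S" "a \<in> S" "b \<in> S" "a \<noteq> b"
    and "\<And>r. r \<in> S \<Longrightarrow> r \<noteq> a \<Longrightarrow> r \<noteq> b \<Longrightarrow> f r = 0"
  shows "sum f S = f a + f b"
proof -
  have "sum f S = sum f {a, b}"
    by (rule sum.mono_neutral_right) (use assms in auto)
  then show ?thesis using assms by simp
qed

lemma sum_supported_on_three:
  assumes "finite S" "a \<in> S" "b \<in> S" "d \<in> S" "a \<noteq> b" "a \<noteq> d" "b \<noteq> d"
    and "\<And>r. r \<in> S \<Longrightarrow> r \<noteq> a \<Longrightarrow> r \<noteq> b \<Longrightarrow> r \<noteq> d \<Longrightarrow> f r = 0"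
  shows "sum f S = f a + f b + f d"
proof -
  have "sum f S = sum f {a, b, d}"
    by (rule sum.mono_neutral_right) (use assms in auto)
  then show ?thesis using assms by (simp add: add.assoc)
qed

text \<open>
  Summing the absolute values of the eigen-equation over c and swapping the sums
  gives |mu| S <= rho S with S = sum |w_r| > 0.
\<close>
lemma nonneg_left_eigen_bound:
  fixes b :: "nat \<Rightarrow> nat \<Rightarrow> real" and w :: "nat \<Rightarrow> complex"
  assumes nonneg: "\<And>r c. r < n \<Longrightarrow> c < n \<Longrightarrow> b r c \<ge> 0"
    and rows: "\<And>r. r < n \<Longrightarrow> (\<Sum>c<n. b r c) = \<rho>"
    and eq: "\<And>c. c < n \<Longrightarrow> \<mu> * w c = (\<Sum>r<n. complex_of_real (b r c) * w r)"
    and nz: "i < n" "w i \<noteq> 0"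
  shows "cmod \<mu> \<le> \<rho>"
proof -
  define S where "S = (\<Sum>r<n. cmod (w r))"
  have "cmod \<mu> * S = (\<Sum>c<n. cmod (\<mu> * w c))"
    by (simp add: S_def sum_distrib_left norm_mult)
  also have "\<dots> \<le> (\<Sum>c<n. \<Sum>r<n. b r c * cmod (w r))"
  proof (rule sum_mono)
    fix c assume c: "c \<in> {..<n}"
    have "cmod (\<mu> * w c) = cmod (\<Sum>r<n. complex_of_real (b r c) * w r)"
      using c eq by simp
    also have "\<dots> \<le> (\<Sum>r<n. cmod (complex_of_real (b r c) * w r))"
      by (rule norm_sum)
    also have "\<dots> = (\<Sum>r<n. b r c * cmod (w r))"
      using c nonneg by (intro sum.cong) (auto simp: norm_mult)
    finally show "cmod (\<mu> * w c) \<le> (\<Sum>r<n. b r c * cmod (w r))" .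
  qed
  also have "\<dots> = (\<Sum>r<n. cmod (w r) * (\<Sum>c<n. b r c))"
    by (subst sum.swap) (simp add: sum_distrib_left mult.commute)
  also have "\<dots> = \<rho> * S"
    by (simp add: S_def rows sum_distrib_left mult.commute)
  finally have "cmod \<mu> * S \<le> \<rho> * S" .
  moreover have "0 < cmod (w i)" using nz by simp
  then have "0 < S"
    unfolding S_def using nz(1)
    by (metis finite_lessThan lessThan_iff member_le_sum norm_ge_zero order_less_le_trans)
  ultimately show ?thesis by simp
qed

lemma Re_lt_of_shifted_disk:
  fixes z :: complex
  assumes disk: "cmod (z + of_real t) \<le> s + t" and ne: "z \<noteq> of_real s"
  shows "Re z < s"
proof (rule ccontr)
  assume "\<not> Re z < s"
  moreover have "Re z + t \<le> s + t"
    using complex_Re_le_cmod[of "z + of_real t"] disk by simp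
  ultimately have re: "Re z = s" by simp
  have "(Re z + t)\<^sup>2 + (Im z)\<^sup>2 \<le> (s + t)\<^sup>2"
    using power_mono[OF disk norm_ge_zero, of 2] by (simp add: cmod_power2)
  then have "Im z = 0" using re by simp
  then show False using re ne by (simp add: complex_eq_iff)
qed

text \<open>
  Adding t I for t large makes the matrix nonnegative with row sums s + t,
  so the eigenvalue z + t lies in the disc of radius s + t.
\<close>
lemma Re_eigenvalue_transpose_lt:
  fixes a :: "nat \<Rightarrow> nat \<Rightarrow> real"
  assumes offdiag: "\<And>r c. r < n \<Longrightarrow> c < n \<Longrightarrow> r \<noteq> c \<Longrightarrow> a r c \<ge> 0"
    and rows: "\<And>r. r < n \<Longrightarrow> (\<Sum>c<n. a r c) = s"
    and ev: "eigenvalue (transpose_mat (mat n n (\<lambda>(r, c). complex_of_real (a r c)))) z"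
    and ne: "z \<noteq> of_real s"
  shows "Re z < s"
proof -
  let ?A = "mat n n (\<lambda>(r, c). complex_of_real (a r c))"
  obtain w where w: "w \<in> carrier_vec n" "w \<noteq> 0\<^sub>v n" and wz: "transpose_mat ?A *\<^sub>v w = z \<cdot>\<^sub>v w"
    using ev by (auto simp: eigenvalue_def eigenvector_def)
  have "\<exists>i<n. w $ i \<noteq> 0"
  proof (rule ccontr)
    assume "\<not> (\<exists>i<n. w $ i \<noteq> 0)"
    then have "w = 0\<^sub>v n" using w(1) by (intro eq_vecI) auto
    with w(2) show False by contradiction
  qed
  then obtain i where i: "i < n" "w $ i \<noteq> 0" by blast
  define t where "t = (\<Sum>r<n. \<bar>a r r\<bar>)"
  define b where "b r c = a r c + (if r = c then t else 0)" for r c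
  have diag: "0 \<le> a r r + t" if "r < n" for r
  proof -
    have "\<bar>a r r\<bar> \<le> t"
      unfolding t_def using that by (intro member_le_sum) auto
    then show ?thesis by (auto dest: abs_le_D2)
  qed
  have b_nonneg: "b r c \<ge> 0" if "r < n" "c < n" for r c
    using offdiag[OF that] diag[OF that(1)] by (cases "r = c") (auto simp: b_def)
  have b_rows: "(\<Sum>c<n. b r c) = s + t" if "r < n" for r
    using that rows by (simp add: b_def sum.distrib)
  have b_eq: "(z + of_real t) * w $ c = (\<Sum>r<n. complex_of_real (b r c) * w $ r)" if c: "c < n" for c
  proof -
    have "z * w $ c = (transpose_mat ?A *\<^sub>v w) $ c"
      using wz c w(1) by simp
    also have "\<dots> = (\<Sum>r<n. complex_of_real (a r c) * w $ r)"
      using transpose_mat_mult_vec_nth[OF w(1) c] by simp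
    finally have "z * w $ c = (\<Sum>r<n. complex_of_real (a r c) * w $ r)" .
    moreover have "(\<Sum>r<n. complex_of_real (b r c) * w $ r)
        = (\<Sum>r<n. complex_of_real (a r c) * w $ r) + of_real t * w $ c"
      using c by (simp add: b_def distrib_right sum.distrib if_distrib[of complex_of_real]
          if_distrib[of "\<lambda>x. x * _"] cong: if_cong)
    ultimately show ?thesis by (simp add: distrib_right)
  qed
  have "cmod (z + of_real t) \<le> s + t"
    using nonneg_left_eigen_bound[of n b "s + t" "z + of_real t" "\<lambda>r. w $ r" i]
      b_nonneg b_rows b_eq i by blast
  then show ?thesis using ne by (rule Re_lt_of_shifted_disk)
qed

lemma repA_as_real_mat:
  "repA m = mat (2*m-2) (2*m-2) (\<lambda>(r, c). complex_of_real (real_of_int (rep_entry m (r+1) (c+1))))"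
  unfolding repA_def by (simp add: case_prod_beta)

lemma rep_entry_offdiag_nonneg: "r \<noteq> c \<Longrightarrow> 0 \<le> rep_entry m r c"
  unfolding rep_entry_def Let_def by auto

text \<open>
  Every row of the replacement matrix sums to 1 (each draw adds one ball in total).
\<close>
lemma rep_entry_row_sum:
  assumes m: "m \<ge> 2" and r: "r < 2*m-2"
  shows "(\<Sum>c<2*m-2. rep_entry m (r+1) (c+1)) = 1"
proof (cases "m = 2")
  case True
  have "{..<2*m-2} = {0, 1::nat}" using True by auto
  moreover have "r = 0 \<or> r = 1" using r True by auto
  ultimately show ?thesis using True by (auto simp: rep_entry_def)
next
  case False
  then have m3: "m \<ge> 3" using m by simp
  let ?f = "\<lambda>c. rep_entry m (r+1) (c+1)"
  consider "r = 0" | "1 \<le> r \<and> r \<le> m-1" | "m \<le> r \<and> r \<le> 2*m-4" | "r = 2*m-3"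
    using r m3 by linarith
  then show ?thesis
  proof cases
    case 1
    have "sum ?f {..<2*m-2} = ?f 0 + ?f m"
      by (rule sum_supported_on_two) (use m3 1 in \<open>auto simp: rep_entry_def\<close>)
    also have "?f 0 = -1" using m3 1 by (simp add: rep_entry_def)
    also have "?f m = 2" using m3 1 by (simp add: rep_entry_def)
    finally show ?thesis by simp
  next
    case 2
    have "sum ?f {..<2*m-2} = ?f (r-1) + ?f r + ?f m"
      by (rule sum_supported_on_three) (use m3 2 in \<open>auto simp: rep_entry_def\<close>)
    also have "?f (r-1) = int r" using m3 2 by (auto simp: rep_entry_def)
    also have "?f r = - int (r+1)" using m3 2 by (auto simp: rep_entry_def)
    also have "?f m = 2" using m3 2 by (auto simp: rep_entry_def)
    finally show ?thesis by simp
  next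
    case 3
    have "sum ?f {..<2*m-2} = ?f r + ?f (r+1)"
      by (rule sum_supported_on_two) (use m3 3 in \<open>auto simp: rep_entry_def Let_def\<close>)
    also have "?f r = - int (r+2-m)" using m3 3 by (auto simp: rep_entry_def Let_def)
    also have "?f (r+1) = int (r+2-m) + 1" using m3 3 by (auto simp: rep_entry_def Let_def)
    finally show ?thesis by simp
  next
    case 4
    have "sum ?f {..<2*m-2} = ?f (m-1) + ?f r"
      by (rule sum_supported_on_two) (use m3 4 in \<open>auto simp: rep_entry_def Let_def\<close>)
    also have "?f (m-1) = int m" using m3 4 by (auto simp: rep_entry_def Let_def)
    also have "?f r = - (int m - 1)" using m3 4 by (auto simp: rep_entry_def Let_def)
    finally show ?thesis by simp
  qed
qed

lemma repA_Re_eigenvalue_lt: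
  assumes m: "m \<ge> 2" and ev: "eigenvalue (transpose_mat (repA m)) z" and z: "z \<noteq> 1"
  shows "Re z < 1"
proof (rule Re_eigenvalue_transpose_lt)
  show "eigenvalue (transpose_mat (mat (2*m-2) (2*m-2)
      (\<lambda>(r, c). complex_of_real (real_of_int (rep_entry m (r+1) (c+1)))))) z"
    using ev by (simp only: repA_as_real_mat)
  show "(\<Sum>c<2*m-2. real_of_int (rep_entry m (r+1) (c+1))) = 1" if "r < 2*m-2" for r
    using rep_entry_row_sum[OF m that] by (metis of_int_1 of_int_sum)
qed (use z rep_entry_offdiag_nonneg in auto)

lemma repA_column:
  assumes "w \<in> carrier_vec (2*m-2)" and "c < 2*m-2"
  shows "(transpose_mat (repA m) *\<^sub>v w) $ c
    = (\<Sum>r<2*m-2. of_int (rep_entry m (r+1) (c+1)) * w $ r)"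
  using transpose_mat_mult_vec_nth[OF assms] unfolding repA_def by simp

text \<open>
  Columns 0, ..., m-2 (0-based) contain only the diagonal entry -(c+1) and the entry c+1
  from the row below.
\<close>
lemma repA_column_lower:
  assumes m: "m \<ge> 2" and w: "w \<in> carrier_vec (2*m-2)" and c: "c \<le> m-2"
  shows "(transpose_mat (repA m) *\<^sub>v w) $ c = of_nat (c+1) * (w $ (c+1) - w $ c)"
proof -
  have "(transpose_mat (repA m) *\<^sub>v w) $ c = (\<Sum>r<2*m-2. of_int (rep_entry m (r+1) (c+1)) * w $ r)"
    using m c by (intro repA_column[OF w]) simp
  also have "\<dots> = of_int (rep_entry m (c+1) (c+1)) * w $ c + of_int (rep_entry m (c+1+1) (c+1)) * w $ (c+1)"
    using m c by (intro sum_supported_on_two) (auto simp: rep_entry_def Let_def)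
  also have "rep_entry m (c+1) (c+1) = - int (c+1)" using m c by (auto simp: rep_entry_def)
  also have "rep_entry m (c+1+1) (c+1) = int (c+1)" using m c by (auto simp: rep_entry_def)
  finally show ?thesis by (simp add: algebra_simps)
qed

text \<open>
  Column m-1 (for m >= 3) contains -m on the diagonal and m from the last row.
\<close>
lemma repA_column_middle:
  assumes m: "m \<ge> 3" and w: "w \<in> carrier_vec (2*m-2)"
  shows "(transpose_mat (repA m) *\<^sub>v w) $ (m-1) = of_nat m * (w $ (2*m-3) - w $ (m-1))"
proof -
  have "(transpose_mat (repA m) *\<^sub>v w) $ (m-1) = (\<Sum>r<2*m-2. of_int (rep_entry m (r+1) (m-1+1)) * w $ r)"
    using m by (intro repA_column[OF w]) simp
  also have "\<dots> = of_int (rep_entry m (m-1+1) (m-1+1)) * w $ (m-1)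
      + of_int (rep_entry m (2*m-3+1) (m-1+1)) * w $ (2*m-3)"
    using m by (intro sum_supported_on_two) (auto simp: rep_entry_def Let_def)
  also have "rep_entry m (m-1+1) (m-1+1) = - int m" using m by (auto simp: rep_entry_def)
  also have "rep_entry m (2*m-3+1) (m-1+1) = int m" using m by (auto simp: rep_entry_def)
  finally show ?thesis by (simp add: algebra_simps)
qed

text \<open>
  Columns m+1, ..., 2m-3 contain the diagonal entry and the entry of the preceding row of
  the chain.
\<close>
lemma repA_column_upper:
  assumes m: "m \<ge> 3" and w: "w \<in> carrier_vec (2*m-2)" and c: "m+1 \<le> c" "c \<le> 2*m-3"
  shows "(transpose_mat (repA m) *\<^sub>v w) $ c = of_nat (c+2-m) * (w $ (c-1) - w $ c)"
proof -
  have "(transpose_mat (repA m) *\<^sub>v w) $ c = (\<Sum>r<2*m-2. of_int (rep_entry m (r+1) (c+1)) * w $ r)"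
    using m c by (intro repA_column[OF w]) simp
  also have "\<dots> = of_int (rep_entry m (c-1+1) (c+1)) * w $ (c-1) + of_int (rep_entry m (c+1) (c+1)) * w $ c"
    using m c by (intro sum_supported_on_two) (auto simp: rep_entry_def Let_def)
  also have "rep_entry m (c-1+1) (c+1) = int (c+2-m)" using m c by (auto simp: rep_entry_def Let_def)
  also have "rep_entry m (c+1) (c+1) = - int (c+2-m)" using m c by (auto simp: rep_entry_def Let_def)
  finally show ?thesis by (simp add: algebra_simps)
qed

text \<open>
  Column m collects the entry 2 from each of the first m rows, together with its diagonal
  entry -2.
\<close>
lemma repA_column_hub:
  assumes m: "m \<ge> 3" and w: "w \<in> carrier_vec (2*m-2)"
  shows "(transpose_mat (repA m) *\<^sub>v w) $ m = 2 * (\<Sum>r<m. w $ r) - 2 * w $ m"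
proof -
  let ?f = "\<lambda>r. of_int (rep_entry m (r+1) (m+1)) * w $ r"
  have "(transpose_mat (repA m) *\<^sub>v w) $ m = (\<Sum>r<2*m-2. ?f r)"
    using m by (intro repA_column[OF w]) simp
  also have "\<dots> = (\<Sum>r<m. ?f r) + (\<Sum>r\<in>{m..<2*m-2}. ?f r)"
    using m by (simp add: lessThan_atLeast0 sum.atLeastLessThan_concat)
  also have "(\<Sum>r<m. ?f r) = (\<Sum>r<m. 2 * w $ r)"
    by (rule sum.cong) (use m in \<open>auto simp: rep_entry_def\<close>)
  also have "(\<Sum>r\<in>{m..<2*m-2}. ?f r) = ?f m"
  proof -
    have "(\<Sum>r\<in>{m..<2*m-2}. ?f r) = sum ?f {m}"
      by (rule sum.mono_neutral_right) (use m in \<open>auto simp: rep_entry_def Let_def\<close>)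
    then show ?thesis by simp
  qed
  also have "rep_entry m (m+1) (m+1) = -2" using m by (auto simp: rep_entry_def Let_def)
  finally show ?thesis by (simp add: sum_distrib_left)
qed

lemma repA_column_top_m2:
  assumes w: "w \<in> carrier_vec 2"
  shows "(transpose_mat (repA 2) *\<^sub>v w) $ 1 = 2 * w $ 0"
proof -
  have "(transpose_mat (repA 2) *\<^sub>v w) $ 1 = (\<Sum>r<2*2-2. of_int (rep_entry 2 (r+1) (1+1)) * w $ r)"
    by (rule repA_column) (use w in simp_all)
  also have "\<dots> = 2 * w $ 0" by (simp add: lessThan_Suc numeral_2_eq_2 rep_entry_def)
  finally show ?thesis .
qed

text \<open>
  Columns 0, ...,
  m-2 propagate zeros upwards through indices below m, column m-1 gives u_(2m-3) = 0, and
  columns 2m-3, ..., m+1 propagate zeros back down to index m.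
\<close>
lemma fixed_vector_vanishing_at_0:
  assumes m: "m \<ge> 2" and u: "u \<in> carrier_vec (2*m-2)"
    and fixed: "transpose_mat (repA m) *\<^sub>v u = u" and u0: "u $ 0 = 0"
  shows "u = 0\<^sub>v (2*m-2)"
proof -
  have col: "(transpose_mat (repA m) *\<^sub>v u) $ c = u $ c" for c
    using fixed by simp
  have lower: "u $ k = 0" if "k < m" for k
    using that
  proof (induction k)
    case 0
    show ?case by (rule u0)
  next
    case (Suc k)
    then have "u $ k = 0" and k: "k \<le> m-2" by simp_all
    with repA_column_lower[OF m u k] col[of k]
    have "of_nat (k+1) * u $ (k+1) = 0" by simp
    then show ?case using of_nat_neq_0[of k, where 'a=complex] by simp
  qed
  have upper: "u $ i = 0" if i: "m \<le> i" "i < 2*m-2" for i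
  proof -
    have m3: "m \<ge> 3" using i by simp
    have "u $ (2*m-3-d) = 0" if "d \<le> m-3" for d
      using that
    proof (induction d)
      case 0
      have "u $ (m-1) = 0" using lower m by simp
      with repA_column_middle[OF m3 u] col[of "m-1"]
      have "of_nat m * u $ (2*m-3) = 0" by simp
      then show ?case using m by simp
    next
      case (Suc d)
      define c where "c = 2*m-3-d"
      have c: "m+1 \<le> c" "c \<le> 2*m-3" "c - 1 = 2*m-3 - Suc d" "c+2-m \<noteq> 0"
        using Suc.prems m3 by (auto simp: c_def)
      have "u $ c = 0" using Suc by (simp add: c_def)
      with repA_column_upper[OF m3 u c(1,2)] col[of c]
      have "of_nat (c+2-m) * u $ (c-1) = 0" by simp
      moreover have "(of_nat (c+2-m) :: complex) \<noteq> 0" using c(4) by (metis of_nat_eq_0_iff)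
      ultimately show ?case using c(3) by simp
    qed
    moreover have "2*m-3-i \<le> m-3" and "2*m-3 - (2*m-3-i) = i" using i by auto
    ultimately show ?thesis by metis
  qed
  show ?thesis
  proof (rule eq_vecI)
    fix i assume "i < dim_vec (0\<^sub>v (2*m-2) :: complex vec)"
    then show "u $ i = 0\<^sub>v (2*m-2) $ i"
      using lower upper by (cases "i < m") auto
  qed (use u in simp)
qed

definition fixed_profile :: "nat \<Rightarrow> nat \<Rightarrow> real" where
  "fixed_profile m i = (if i < m then real (i+1) else real m * (real m + 1) / real (i+3-m))"

definition profile_vec :: "nat \<Rightarrow> complex vec" where
  "profile_vec m = vec (2*m-2) (\<lambda>i. complex_of_real (fixed_profile m i))"

definition profile_total :: "nat \<Rightarrow> real" where
  "profile_total m = real m * (real m + 1) * (harm m - 1)"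

lemma sum_upto_real: "(\<Sum>r<m. real (r+1)) = real m * (real m + 1) / 2"
  by (induction m) (auto simp: field_simps)

lemma profile_vec_fixed:
  assumes m: "m \<ge> 2"
  shows "transpose_mat (repA m) *\<^sub>v profile_vec m = profile_vec m"
proof (rule eq_vecI)
  let ?p = "profile_vec m" and ?g = "fixed_profile m"
  have p: "?p \<in> carrier_vec (2*m-2)" by (simp add: profile_vec_def)
  have p_nth: "?p $ i = complex_of_real (?g i)" if "i < 2*m-2" for i
    using that by (simp add: profile_vec_def)
  show "dim_vec (transpose_mat (repA m) *\<^sub>v ?p) = dim_vec ?p"
    using p by (simp add: repA_def)
  fix c assume "c < dim_vec ?p"
  then have c: "c < 2*m-2" using p by simp
  consider "c \<le> m-2" | "m = 2" "c = 1" | "m \<ge> 3" "c = m-1" | "m \<ge> 3" "c = m"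
    | "m \<ge> 3" "m+1 \<le> c" using c m by linarith
  then show "(transpose_mat (repA m) *\<^sub>v ?p) $ c = ?p $ c"
  proof cases
    case 1
    then have "c + 1 < m" using m by simp
    then have "real (c+1) * (?g (c+1) - ?g c) = ?g c" by (simp add: fixed_profile_def)
    moreover have "(transpose_mat (repA m) *\<^sub>v ?p) $ c
        = complex_of_real (real (c+1) * (?g (c+1) - ?g c))"
      using repA_column_lower[OF m p 1] \<open>c + 1 < m\<close> by (simp add: p_nth)
    ultimately show ?thesis using c by (simp add: p_nth)
  next
    case 2
    then show ?thesis
      using repA_column_top_m2[of ?p] p p_nth[of 0] p_nth[of 1] by (simp add: fixed_profile_def)
  next
    case 3
    have "real m * (?g (2*m-3) - ?g (m-1)) = ?g (m-1)"
      using 3 by (simp add: fixed_profile_def field_simps)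
    moreover have "(transpose_mat (repA m) *\<^sub>v ?p) $ (m-1)
        = complex_of_real (real m * (?g (2*m-3) - ?g (m-1)))"
      using repA_column_middle[OF 3(1) p] 3 by (simp add: p_nth)
    ultimately show ?thesis using 3 c by (simp add: p_nth)
  next
    case 4
    have "(\<Sum>r<m. ?p $ r) = (\<Sum>r<m. complex_of_real (real (r+1)))"
      using 4 by (intro sum.cong) (simp_all add: p_nth fixed_profile_def)
    then have hub: "(transpose_mat (repA m) *\<^sub>v ?p) $ m
        = complex_of_real (2 * (\<Sum>r<m. real (r+1)) - 2 * ?g m)"
      using repA_column_hub[OF 4(1) p] 4 by (simp add: p_nth)
    have balance: "2 * (\<Sum>r<m. real (r+1)) - 2 * ?g m = ?g m"
      unfolding sum_upto_real using 4 by (simp add: fixed_profile_def field_simps)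
    show ?thesis unfolding 4(2) hub balance using 4(1) by (simp add: p_nth)
  next
    case 5
    define k where "k = c+2-m"
    have k: "c-1+3-m = k" "c+3-m = k+1" "k > 0" "\<not> c-1 < m" "\<not> c < m"
      using 5 by (auto simp: k_def)
    have g: "?g (c-1) = real m * (real m + 1) / real k" "?g c = real m * (real m + 1) / (real k + 1)"
      unfolding fixed_profile_def if_not_P[OF k(4)] if_not_P[OF k(5)] k(1,2) by simp_all
    have "real k * (M / real k - M / (real k + 1)) = M / (real k + 1)" for M :: real
      using k(3) by (simp add: divide_simps) (simp add: algebra_simps)
    then have balance: "real k * (?g (c-1) - ?g c) = ?g c"
      unfolding g .
    have col: "(transpose_mat (repA m) *\<^sub>v ?p) $ c
        = complex_of_real (real k * (?g (c-1) - ?g c))"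
      using repA_column_upper[OF 5(1) p 5(2)] 5 c by (simp add: p_nth k_def)
    show ?thesis unfolding col balance using c by (simp add: p_nth)
  qed
qed

lemma harm_split:
  assumes "m \<ge> 2"
  shows "harm m = 3/2 + (\<Sum>r=3..m. 1 / real r)"
proof -
  have "m = 2 + (m-2)" using assms by simp
  then have "harm m = (\<Sum>r=1..2+(m-2). 1 / real r)"
    unfolding harm_def by simp
  also have "\<dots> = (\<Sum>r=1..2. 1 / real r) + (\<Sum>r=2+1..2+(m-2). 1 / real r)"
    by (rule sum.ub_add_nat) simp
  also have "(\<Sum>r=1..2. 1 / real r) = 3/2" by (simp add: numeral_2_eq_2)
  also have "2 + 1 = (3::nat)" by simp
  also have "2 + (m-2) = m" using assms by simp
  finally show ?thesis .
qed

lemma profile_sum: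
  assumes m: "m \<ge> 2"
  shows "(\<Sum>i<2*m-2. fixed_profile m i) = profile_total m"
proof -
  have "(\<Sum>i<2*m-2. fixed_profile m i)
      = (\<Sum>i<m. fixed_profile m i) + (\<Sum>i\<in>{m..<2*m-2}. fixed_profile m i)"
    using m by (simp add: lessThan_atLeast0 sum.atLeastLessThan_concat)
  also have "(\<Sum>i<m. fixed_profile m i) = real m * (real m + 1) / 2"
    by (simp add: fixed_profile_def sum_upto_real[symmetric])
  also have "(\<Sum>i\<in>{m..<2*m-2}. fixed_profile m i)
      = real m * (real m + 1) * (\<Sum>i\<in>{m..<2*m-2}. 1 / real (i+3-m))"
    by (simp add: fixed_profile_def sum_distrib_left)
  also have "(\<Sum>i\<in>{m..<2*m-2}. 1 / real (i+3-m)) = (\<Sum>r=3..m. 1 / real r)"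
    by (rule sum.reindex_bij_witness[where i="\<lambda>r. r+m-3" and j="\<lambda>i. i+3-m"]) (use m in auto)
  also have "\<dots> = harm m - 3/2" using harm_split[OF m] by simp
  also have "real m * (real m + 1) / 2 + real m * (real m + 1) * (harm m - 3/2) = profile_total m"
    by (simp add: profile_total_def field_simps)
  finally show ?thesis .
qed

text \<open>
  The total mass is positive, since H_m >= 3/2 for m >= 2.
\<close>
lemma profile_total_pos: "m \<ge> 2 \<Longrightarrow> 0 < profile_total m"
  using harm_split[of m] sum_nonneg[of "{3..m}" "\<lambda>r. 1 / real r"]
  by (simp add: profile_total_def)

lemma vvec_eq_scaled_profile:
  assumes m: "m \<ge> 2"
  shows "vvec m = complex_of_real (1 / profile_total m) \<cdot>\<^sub>v profile_vec m"
proof (rule eq_vecI)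
  fix i assume "i < dim_vec (complex_of_real (1 / profile_total m) \<cdot>\<^sub>v profile_vec m)"
  then have i: "i < 2*m-2" by (simp add: profile_vec_def)
  have "vcomp m (i+1) = fixed_profile m i / profile_total m"
  proof (cases "i < m")
    case False
    then have "real (i+3-m) = real (i+1-m) + 2" by simp
    then show ?thesis using False by (simp add: vcomp_def fixed_profile_def profile_total_def)
  qed (simp add: vcomp_def fixed_profile_def profile_total_def)
  then show "vvec m $ i = (complex_of_real (1 / profile_total m) \<cdot>\<^sub>v profile_vec m) $ i"
    using i by (simp add: vvec_def profile_vec_def)
qed (simp add: vvec_def profile_vec_def)

lemma vvec_fixed:
  assumes m: "m \<ge> 2"
  shows "transpose_mat (repA m) *\<^sub>v vvec m = vvec m"
proof -
  have A: "transpose_mat (repA m) \<in> carrier_mat (2*m-2) (2*m-2)" by (simp add: repA_def)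
  have p: "profile_vec m \<in> carrier_vec (2*m-2)" by (simp add: profile_vec_def)
  show ?thesis
    by (simp add: vvec_eq_scaled_profile[OF m] mult_mat_vec[OF A p] profile_vec_fixed[OF m])
qed

lemma vvec_sum:
  assumes m: "m \<ge> 2"
  shows "(\<Sum>i<2*m-2. vvec m $ i) = 1"
proof -
  have "(\<Sum>i<2*m-2. vvec m $ i) = complex_of_real ((\<Sum>i<2*m-2. fixed_profile m i) / profile_total m)"
    by (simp add: vvec_eq_scaled_profile[OF m] profile_vec_def sum_divide_distrib)
  then show ?thesis using profile_sum[OF m] profile_total_pos[OF m] by simp
qed

lemma vvec_at_0: "m \<ge> 2 \<Longrightarrow> vvec m $ 0 = complex_of_real (1 / profile_total m)"
  by (simp add: vvec_eq_scaled_profile profile_vec_def fixed_profile_def)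

text \<open>
  Every fixed vector is a multiple of v: subtracting the right multiple of v yields a fixed
  vector vanishing at index 0.
\<close>
lemma fixed_vector_multiple:
  assumes m: "m \<ge> 2" and w: "w \<in> carrier_vec (2*m-2)"
    and fixed: "transpose_mat (repA m) *\<^sub>v w = w"
  shows "w = (w $ 0 / vvec m $ 0) \<cdot>\<^sub>v vvec m"
proof -
  let ?A = "transpose_mat (repA m)" and ?c = "w $ 0 / vvec m $ 0"
  have A: "?A \<in> carrier_mat (2*m-2) (2*m-2)" by (simp add: repA_def)
  have v: "vvec m \<in> carrier_vec (2*m-2)" by (simp add: vvec_def)
  have v0: "vvec m $ 0 \<noteq> 0" using vvec_at_0[OF m] profile_total_pos[OF m] by simp
  have "?A *\<^sub>v (w - ?c \<cdot>\<^sub>v vvec m) = w - ?c \<cdot>\<^sub>v vvec m"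
    using A w v by (simp add: mult_minus_distrib_mat_vec mult_mat_vec fixed vvec_fixed[OF m])
  moreover have "(w - ?c \<cdot>\<^sub>v vvec m) $ 0 = 0" using v0 m w v by simp
  ultimately have diff: "w - ?c \<cdot>\<^sub>v vvec m = 0\<^sub>v (2*m-2)"
    using fixed_vector_vanishing_at_0[OF m] w v by simp
  show ?thesis
  proof (rule eq_vecI)
    fix i assume i: "i < dim_vec (?c \<cdot>\<^sub>v vvec m)"
    then have "(w - ?c \<cdot>\<^sub>v vvec m) $ i = 0" using diff v by simp
    then show "w $ i = (?c \<cdot>\<^sub>v vvec m) $ i" using i w v by simp
  qed (use w v in simp)
qed

lemma normalised_fixed_vector_unique:
  assumes m: "m \<ge> 2" and w: "w \<in> carrier_vec (2*m-2)"
    and fixed: "transpose_mat (repA m) *\<^sub>v w = w" and total: "(\<Sum>i<2*m-2. w $ i) = 1"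
  shows "w = vvec m"
proof -
  define c where "c = w $ 0 / vvec m $ 0"
  have wc: "w = c \<cdot>\<^sub>v vvec m"
    unfolding c_def by (rule fixed_vector_multiple[OF m w fixed])
  have "1 = (\<Sum>i<2*m-2. c * vvec m $ i)"
    using total wc by (simp add: vvec_def)
  also have "\<dots> = c" using vvec_sum[OF m] by (simp flip: sum_distrib_left)
  finally show ?thesis using wc by simp
qed

lemma vvec_eigenvector:
  assumes m: "m \<ge> 2"
  shows "eigenvector (transpose_mat (repA m)) (vvec m) 1"
proof -
  have "vvec m $ 0 \<noteq> 0" using vvec_at_0[OF m] profile_total_pos[OF m] by simp
  then have "vvec m \<noteq> 0\<^sub>v (2*m-2)" using m by auto
  then show ?thesis
    using vvec_fixed[OF m] by (simp add: eigenvector_def repA_def vvec_def)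
qed

theorem lemma1:
  fixes m :: nat
  assumes "m \<ge> 2"
  shows "transpose_mat (repA m) *\<^sub>v vvec m = vvec m
    \<and> (\<Sum>i<2 * m - 2. vvec m $ i) = 1
    \<and> eigenvalue (transpose_mat (repA m)) 1
    \<and> (\<forall>z. eigenvalue (transpose_mat (repA m)) z \<and> z \<noteq> 1 \<longrightarrow> Re z < 1)
    \<and> (\<forall>w. eigenvector (transpose_mat (repA m)) w 1 \<longrightarrow> (\<exists>c. w = c \<cdot>\<^sub>v vvec m))
    \<and> (\<forall>w \<in> carrier_vec (2 * m - 2).
         transpose_mat (repA m) *\<^sub>v w = w \<and> (\<Sum>i<2 * m - 2. w $ i) = 1 \<longrightarrow> w = vvec m)"
proof -
  have eigenline: "\<exists>c. w = c \<cdot>\<^sub>v vvec m" if "eigenvector (transpose_mat (repA m)) w 1" for w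
    using that fixed_vector_multiple[OF assms, of w] by (auto simp: eigenvector_def repA_def)
  show ?thesis
    using vvec_fixed[OF assms] vvec_sum[OF assms] vvec_eigenvector[OF assms]
      repA_Re_eigenvalue_lt[OF assms] eigenline normalised_fixed_vector_unique[OF assms]
    unfolding eigenvalue_def by blast
qed

end
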